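(* Let $b,c\in Z^{10}$ with $\sum_i b_i=\sum_i c_i=0$, and assume $t\nmid B_i$ and $t\nmid C_i$ for all odd $i$. Let $l$ be odd such that $t\mid B_l+B_{l+2}$, $t\mid B_{l+2}+B_{l+4}$, $t\nmid B_i+B_{i+2}$ for all odd $i\notin\{l,l+2\}$, and likewise $t\mid C_l+C_{l+2}$, $t\mid C_{l+2}+C_{l+4}$, $t\nmid C_i+C_{i+2}$ for all odd $i\notin\{l,l+2\}$ (indices mod $10$). Then $\mathbb{M}(b)$ and $\mathbb{M}(c)$ are isomorphic $B_{5,10}$-modules.
   Context: Let $Z=\mathbb{C}[[t]]$. Let $\Gamma_{10}$ be the quiver with vertices $0,1,\dots,9$ (indices taken mod $10$) on a cycle and arrows $x_i\colon i-1\to i$, $y_i\colon i\to i-1$ for $i=1,\dots,10$. Let $B_{5,10}$ be the completed path algebra of $\Gamma_{10}$ modulo the closed ideal generated by $xy=yx$ and $x^5=y^5$ at every vertex. For $b=(b_1,\dots,b_{10})\in Z^{10}$ with $\sum_i b_i=0$, the $B_{5,10}$-module $\mathbb{M}(b)$ has $V_i=Z\oplus Z$ at every vertex, and for odd $j$: $x_j=\begin{pmatrix} t& b_j\\ 0&1\end{pmatrix}$, $y_j=\begin{pmatrix} 1&-b_j\\0&t\end{pmatrix}$; for even $j$: $x_j=\begin{pmatrix}1&b_j\\0&t\end{pmatrix}$, $y_j=\begin{pmatrix}t&-b_j\\0&1\end{pmatrix}$. An isomorphism $\mathbb{M}(b)\to\mathbb{M}(c)$ is a family of invertible $Z$-linear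 maps $\varphi_i\colon Z^2\to Z^2$ commuting with all $x_i$ and $y_i$. For odd $i$ write $B_i=b_i+b_{i+1}$ and $C_i=c_i+c_{i+1}$ (indices mod $10$). *)

theory Defs
  imports "HOL-Computational_Algebra.Formal_Power_Series" "Jordan_Normal_Form.Matrix"
begin

text \<open>Z = C[[t]] is modelled as complex fps, t = fps_X. Tuples b = (b_1,...,b_10) are
functions nat => complex fps, of which only the values at 1..10 matter.
Indices are taken mod 10 via idx, which maps every natural number to its
representative in 1..10.\<close>

type_synonym Z = "complex fps"

definition idx :: "nat \<Rightarrow> nat" where
  "idx k = ((k + 9) mod 10) + 1"

definition Bsum :: "(nat \<Rightarrow> Z) \<Rightarrow> nat \<Rightarrow> Z" where
  "Bsum b i = b (idx i) + b (idx (i + 1))"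

text \<open>The arrow matrices of M(b) (acting on column vectors in Z^2).\<close>
definition xmat :: "(nat \<Rightarrow> Z) \<Rightarrow> nat \<Rightarrow> Z mat" where
  "xmat b j = (if odd j then mat_of_rows_list 2 [[fps_X, b j], [0, 1]]
                        else mat_of_rows_list 2 [[1, b j], [0, fps_X]])"

definition ymat :: "(nat \<Rightarrow> Z) \<Rightarrow> nat \<Rightarrow> Z mat" where
  "ymat b j = (if odd j then mat_of_rows_list 2 [[1, - b j], [0, fps_X]]
                        else mat_of_rows_list 2 [[fps_X, - b j], [0, 1]])"

text \<open>Isomorphism M(b) -> M(c): invertible Z-linear maps phi_i on V_i = Z^2 (vertices 0..9)
commuting with all arrows; x_j : V_(j-1) -> V_(j mod 10), y_j : V_(j mod 10) -> V_(j-1).\<close>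
definition M_iso :: "(nat \<Rightarrow> Z) \<Rightarrow> (nat \<Rightarrow> Z) \<Rightarrow> bool" where
  "M_iso b c \<longleftrightarrow> (\<exists>\<phi> :: nat \<Rightarrow> Z mat.
      (\<forall>i < 10. \<phi> i \<in> carrier_mat 2 2 \<and> invertible_mat (\<phi> i)) \<and>
      (\<forall>j \<in> {1..10}.
          \<phi> (j mod 10) * xmat b j = xmat c j * \<phi> (j - 1) \<and>
          \<phi> (j - 1) * ymat b j = ymat c j * \<phi> (j mod 10)))"

end

theory Submission
  imports Defs
begin

text \<open>
  Put a_k(b) for the constant term of b_1 - B_1 - B_3 - ... - B_(2k-1), indices k mod 5; consecutive
  points differ by the constant term of B_(2k+1). A Moebius transformation h with h(a_k(b)) = a_k(c)
  for all k gives an isomorphism: at the odd vertex 2k+1 take the constant matrix of h conjugated by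
  the shears with the partial sums b_2 + ... + b_(2k+1) and c_2 + ... + c_(2k+1); the matrix at the
  even vertex 2k is then forced by the arrow x_(2k+1), and it has entries in C[[t]] precisely because
  h(a_k(b)) = a_k(c). Under the hypotheses both configurations of five points have the shape
  (p, q, p, q, r) with p, q, r distinct, and a Moebius transformation can send any three distinct
  points to any three distinct points.
\<close>

lemma fps_X_mult_shift_1:
  "fps_nth f 0 = 0 \<Longrightarrow> fps_X * fps_shift 1 f = (f :: 'a::comm_ring_1 fps)"
  by (intro fps_ext) (simp add: fps_X_mult_nth)

lemma fps_X_dvd_iff_nth_0: "fps_X dvd f \<longleftrightarrow> fps_nth (f :: 'a::comm_ring_1 fps) 0 = 0"
proof
  assume "fps_X dvd f"
  then obtain g where "f = fps_X * g" by (rule dvdE)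
  then show "fps_nth f 0 = 0" by simp
next
  assume "fps_nth f 0 = 0"
  then have "f = fps_X * fps_shift 1 f" by (rule fps_X_mult_shift_1[symmetric])
  then show "fps_X dvd f" by (rule dvdI)
qed

definition mat2 :: "'a::zero \<Rightarrow> 'a \<Rightarrow> 'a \<Rightarrow> 'a \<Rightarrow> 'a mat" where
  "mat2 p q r s = mat_of_rows_list 2 [[p, q], [r, s]]"

lemma mat2_dims [simp]: "dim_row (mat2 p q r s) = 2" "dim_col (mat2 p q r s) = 2"
  by (simp_all add: mat2_def mat_of_rows_list_def)

lemma mat2_carrier [simp]: "mat2 p q r s \<in> carrier_mat 2 2"
  by (rule carrier_matI) simp_all

text \<open>Stated with \<open>Suc 0\<close>, the simp normal form of \<open>1 :: nat\<close>.\<close>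

lemma mat2_index [simp]:
  "mat2 p q r s $$ (0, 0) = p" "mat2 p q r s $$ (0, Suc 0) = q"
  "mat2 p q r s $$ (Suc 0, 0) = r" "mat2 p q r s $$ (Suc 0, Suc 0) = s"
  by (simp_all add: mat2_def mat_of_rows_list_def)

lemma mat2_eq_iff [simp]:
  "mat2 p q r s = mat2 p' q' r' s' \<longleftrightarrow> p = p' \<and> q = q' \<and> r = r' \<and> s = s'"
proof
  assume "mat2 p q r s = mat2 p' q' r' s'"
  from arg_cong[where f = "\<lambda>M. (M $$ (0, 0), M $$ (0, Suc 0), M $$ (Suc 0, 0), M $$ (Suc 0, Suc 0))", OF this]
  show "p = p' \<and> q = q' \<and> r = r' \<and> s = s'" by (simp only: mat2_index prod.inject)
qed simp

lemma mat2_mult [simp]: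
  "mat2 p q r s * mat2 p' q' r' s' =
     mat2 (p*p' + q*r') (p*q' + q*s') (r*p' + s*r') (r*q' + s*s' :: 'a::semiring_0)"
  unfolding mat2_def
  by (rule eq_matI)
     (auto simp: mat_of_rows_list_def scalar_prod_def less_2_cases_iff numeral_2_eq_2 less_Suc_eq)

lemma mat2_one: "mat2 1 0 0 1 = (1\<^sub>m 2 :: 'a::semiring_1 mat)"
  unfolding mat2_def by (rule eq_matI) (auto simp: mat_of_rows_list_def less_2_cases_iff)

lemma invertible_mat2:
  fixes p q r s u :: "'a::comm_ring_1"
  assumes "(p*s - q*r) * u = 1"
  shows "invertible_mat (mat2 p q r s)"
proof -
  let ?B = "mat2 (s*u) (-q*u) (-r*u) (p*u)"
  have "mat2 p q r s * ?B = mat2 ((p*s - q*r) * u) 0 0 ((p*s - q*r) * u)"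
    "?B * mat2 p q r s = mat2 ((p*s - q*r) * u) 0 0 ((p*s - q*r) * u)"
    by (simp_all add: algebra_simps)
  then have "inverts_mat (mat2 p q r s) ?B \<and> inverts_mat ?B (mat2 p q r s)"
    unfolding inverts_mat_def assms mat2_one by simp
  then show ?thesis
    unfolding invertible_mat_def by auto
qed

lemma xmat_odd: "odd j \<Longrightarrow> xmat b j = mat2 fps_X (b j) 0 1"
  by (simp add: xmat_def mat2_def)

lemma xmat_even: "even j \<Longrightarrow> xmat b j = mat2 1 (b j) 0 fps_X"
  by (simp add: xmat_def mat2_def)

lemma ymat_odd: "odd j \<Longrightarrow> ymat b j = mat2 1 (- b j) 0 fps_X"
  by (simp add: ymat_def mat2_def)

lemma ymat_even: "even j \<Longrightarrow> ymat b j = mat2 fps_X (- b j) 0 1"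
  by (simp add: ymat_def mat2_def)

text \<open>
  The matrix x_gamma^-1 M x_beta for the odd arrow matrices x_beta = [[t, beta], [0, 1]]; its upper
  right entry is a quotient by t, exact when the constant term of beta p + q - gamma (r beta + s)
  vanishes.
\<close>

definition transfer_odd :: "Z \<Rightarrow> Z \<Rightarrow> Z mat \<Rightarrow> Z mat" where
  "transfer_odd \<beta> \<gamma> M =
     (let p = M $$ (0, 0); q = M $$ (0, 1); r = M $$ (1, 0); s = M $$ (1, 1)
      in mat2 (p - \<gamma>*r) (fps_shift 1 (\<beta>*p + q - \<gamma>*(r*\<beta> + s))) (fps_X*r) (r*\<beta> + s))"

lemma transfer_odd_mat2 [simp]:
  "transfer_odd \<beta> \<gamma> (mat2 p q r s) =
     mat2 (p - \<gamma>*r) (fps_shift 1 (\<beta>*p + q - \<gamma>*(r*\<beta> + s))) (fps_X*r) (r*\<beta> + s)"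
  by (simp add: transfer_odd_def)

lemma transfer_odd_intertwines_odd_arrows:
  assumes "fps_nth (\<beta>*p + q - \<gamma>*(r*\<beta> + s)) 0 = 0"
  shows "mat2 p q r s * mat2 fps_X \<beta> 0 1 = mat2 fps_X \<gamma> 0 1 * transfer_odd \<beta> \<gamma> (mat2 p q r s)"
    and "transfer_odd \<beta> \<gamma> (mat2 p q r s) * mat2 1 (-\<beta>) 0 fps_X = mat2 1 (-\<gamma>) 0 fps_X * mat2 p q r s"
proof -
  define E where "E = fps_shift 1 (\<beta>*p + q - \<gamma>*(r*\<beta> + s))"
  have XE: "fps_X * E = \<beta>*p + q - \<gamma>*(r*\<beta> + s)" and EX: "E * fps_X = \<beta>*p + q - \<gamma>*(r*\<beta> + s)"
    using fps_X_mult_shift_1[OF assms] by (simp_all add: E_def mult.commute)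
  show "mat2 p q r s * mat2 fps_X \<beta> 0 1 = mat2 fps_X \<gamma> 0 1 * transfer_odd \<beta> \<gamma> (mat2 p q r s)"
    unfolding transfer_odd_mat2 E_def[symmetric] mat2_mult mat2_eq_iff XE EX by (simp add: algebra_simps)
  show "transfer_odd \<beta> \<gamma> (mat2 p q r s) * mat2 1 (-\<beta>) 0 fps_X = mat2 1 (-\<gamma>) 0 fps_X * mat2 p q r s"
    unfolding transfer_odd_mat2 E_def[symmetric] mat2_mult mat2_eq_iff XE EX by (simp add: algebra_simps)
qed

lemma transfer_odd_intertwines_even_arrows:
  assumes "fps_nth (\<beta>*p + q - \<gamma>*(r*\<beta> + s)) 0 = 0"
    and "mat2 p q r s = mat2 1 (\<gamma>' + \<gamma>) 0 1 * mat2 p' q' r' s' * mat2 1 (- (\<beta>' + \<beta>)) 0 1"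
  shows "transfer_odd \<beta> \<gamma> (mat2 p q r s) * mat2 1 \<beta>' 0 fps_X = mat2 1 \<gamma>' 0 fps_X * mat2 p' q' r' s'"
    and "mat2 p' q' r' s' * mat2 fps_X (-\<beta>') 0 1 = mat2 fps_X (-\<gamma>') 0 1 * transfer_odd \<beta> \<gamma> (mat2 p q r s)"
proof -
  define E where "E = fps_shift 1 (\<beta>*p + q - \<gamma>*(r*\<beta> + s))"
  have XE: "fps_X * E = \<beta>*p + q - \<gamma>*(r*\<beta> + s)" and EX: "E * fps_X = \<beta>*p + q - \<gamma>*(r*\<beta> + s)"
    using fps_X_mult_shift_1[OF assms(1)] by (simp_all add: E_def mult.commute)
  have entries: "p = p' + (\<gamma>' + \<gamma>)*r'" "q = - (\<beta>' + \<beta>)*p + q' + (\<gamma>' + \<gamma>)*s'"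
    "r = r'" "s = s' - (\<beta>' + \<beta>)*r'"
    using assms(2) by (simp_all add: algebra_simps)
  show "transfer_odd \<beta> \<gamma> (mat2 p q r s) * mat2 1 \<beta>' 0 fps_X = mat2 1 \<gamma>' 0 fps_X * mat2 p' q' r' s'"
    unfolding transfer_odd_mat2 E_def[symmetric] mat2_mult mat2_eq_iff XE EX
    unfolding entries by (simp add: algebra_simps)
  show "mat2 p' q' r' s' * mat2 fps_X (-\<beta>') 0 1 = mat2 fps_X (-\<gamma>') 0 1 * transfer_odd \<beta> \<gamma> (mat2 p q r s)"
    unfolding transfer_odd_mat2 E_def[symmetric] mat2_mult mat2_eq_iff XE EX
    unfolding entries by (simp add: algebra_simps)
qed

lemma invertible_transfer_odd:
  assumes "fps_nth (\<beta>*p + q - \<gamma>*(r*\<beta> + s)) 0 = 0" and "(p*s - q*r) * u = 1"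
  shows "invertible_mat (transfer_odd \<beta> \<gamma> (mat2 p q r s))"
proof -
  define E where "E = fps_shift 1 (\<beta>*p + q - \<gamma>*(r*\<beta> + s))"
  have "fps_X * E = \<beta>*p + q - \<gamma>*(r*\<beta> + s)"
    unfolding E_def by (rule fps_X_mult_shift_1[OF assms(1)])
  then have "E * (fps_X*r) = (\<beta>*p + q - \<gamma>*(r*\<beta> + s)) * r"
    by (metis mult.assoc mult.commute)
  then have "(p - \<gamma>*r) * (r*\<beta> + s) - E * (fps_X*r) = p*s - q*r"
    by (simp add: algebra_simps)
  with assms(2) have "((p - \<gamma>*r) * (r*\<beta> + s) - E * (fps_X*r)) * u = 1"
    by simp
  then show ?thesis
    unfolding transfer_odd_mat2 E_def[symmetric] by (rule invertible_mat2)
qed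

lemma sum_pairs:
  fixes f :: "nat \<Rightarrow> 'a::comm_monoid_add"
  shows "(\<Sum>i=1..2*n. f i) = (\<Sum>j<n. f (2*j + 1) + f (2*j + 2))"
  by (induction n) (simp_all add: algebra_simps)

lemma idx_eq_self: "1 \<le> i \<Longrightarrow> i \<le> 10 \<Longrightarrow> idx i = i"
  unfolding idx_def by presburger

lemma idx_add_1: "idx (i + 1) = i mod 10 + 1"
  by (simp add: idx_def)

lemma idx_add_10: "idx (i + 10) = idx i"
  unfolding idx_def by presburger

lemma Bsum_add_10: "Bsum b (i + 10) = Bsum b i"
  unfolding Bsum_def using idx_add_10[of i] idx_add_10[of "i + 1"] by (simp add: ac_simps)

lemma Bsum_odd_less_10: "k < 5 \<Longrightarrow> Bsum b (2*k + 1) = b (2*k + 1) + b (2*k + 2)"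
  unfolding Bsum_def using idx_eq_self[of "2*k + 1"] idx_eq_self[of "2*k + 2"] by simp

lemma sum_Bsum_odd: "(\<Sum>j<5. Bsum b (2*j + 1)) = (\<Sum>i=1..10. b i)"
proof -
  have "(\<Sum>j<5. Bsum b (2*j + 1)) = (\<Sum>j<5. b (2*j + 1) + b (2*j + 2))"
    by (intro sum.cong refl Bsum_odd_less_10) simp
  also have "\<dots> = (\<Sum>i=1..2*5. b i)"
    by (rule sum_pairs[symmetric])
  finally show ?thesis by simp
qed

definition point_fps :: "(nat \<Rightarrow> Z) \<Rightarrow> nat \<Rightarrow> Z" where
  "point_fps b k = b 1 - (\<Sum>j<k. Bsum b (2*j + 1))"

definition point :: "(nat \<Rightarrow> Z) \<Rightarrow> nat \<Rightarrow> complex" where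
  "point b k = fps_nth (point_fps b k) 0"

text \<open>
  For \<open>k < 5\<close> this is \<open>b 2 + ... + b (2*k + 1)\<close> (see \<open>psum_less_5\<close>); going through
  \<open>point_fps\<close> makes it 5-periodic in k once the \<open>b i\<close> sum to 0.
\<close>

definition psum :: "(nat \<Rightarrow> Z) \<Rightarrow> nat \<Rightarrow> Z" where
  "psum b k = b (idx (2*k + 1)) - point_fps b k"

lemma point_fps_Suc: "point_fps b (Suc k) = point_fps b k - Bsum b (2*k + 1)"
  by (simp add: point_fps_def)

lemma point_fps_add_5:
  assumes "(\<Sum>i=1..10. b i) = 0"
  shows "point_fps b (k + 5) = point_fps b k"
proof (induction k)
  case 0
  show ?case using assms sum_Bsum_odd[of b] by (simp add: point_fps_def)
next
  case (Suc k)
  have "Bsum b (2*(k + 5) + 1) = Bsum b (2*k + 1)"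
    using Bsum_add_10[of b "2*k + 1"] by (simp add: ac_simps)
  with Suc show ?case
    using point_fps_Suc[of b k] point_fps_Suc[of b "k + 5"] by simp
qed

lemma point_fps_mod_5:
  assumes "(\<Sum>i=1..10. b i) = 0"
  shows "point_fps b (m mod 5) = point_fps b m"
proof -
  have "point_fps b (r + 5*q) = point_fps b r" for r q
  proof (induction q)
    case (Suc q)
    have "point_fps b (r + 5*Suc q) = point_fps b ((r + 5*q) + 5)" by (simp add: ac_simps)
    also have "\<dots> = point_fps b r" using point_fps_add_5[OF assms] Suc by simp
    finally show ?case .
  qed simp
  from this[of "m mod 5" "m div 5"] show ?thesis by simp
qed

lemma point_diff_Suc: "point b k - point b (Suc k) = fps_nth (Bsum b (2*k + 1)) 0"
  by (simp add: point_def point_fps_Suc)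

lemma point_mod_5: "(\<Sum>i=1..10. b i) = 0 \<Longrightarrow> point b (m mod 5) = point b m"
  by (simp add: point_def point_fps_mod_5)

lemma psum_mod_5:
  assumes "(\<Sum>i=1..10. b i) = 0"
  shows "psum b (m mod 5) = psum b m"
proof -
  have "(2*m) mod 10 = 2*(m mod 5)"
    using mod_mult_mult1[of 2 m 5] by simp
  then have "idx (2*(m mod 5) + 1) = idx (2*m + 1)"
    by (simp add: idx_def)
  then show ?thesis by (simp add: psum_def point_fps_mod_5[OF assms])
qed

lemma psum_Suc: "psum b (Suc k) = psum b k + b (idx (2*k + 2)) + b (idx (2*Suc k + 1))"
  by (simp add: psum_def point_fps_Suc Bsum_def algebra_simps)

lemma psum_less_5: "k < 5 \<Longrightarrow> b (2*k + 1) - psum b k = point_fps b k"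
  by (simp add: psum_def idx_eq_self)

lemma psum_Suc_mod:
  assumes "(\<Sum>i=1..10. b i) = 0" and "m < 5"
  shows "psum b (Suc m mod 5) = psum b m + b (2*m + 2) + b (2*(Suc m mod 5) + 1)"
proof -
  have "(2*m + 2) mod 10 = 2*(Suc m mod 5)"
    using mod_mult_mult1[of 2 "Suc m" 5] by simp
  then have "idx (2*Suc m + 1) = 2*(Suc m mod 5) + 1"
    using idx_add_1[of "2*m + 2"] by simp
  moreover have "idx (2*m + 2) = 2*m + 2"
    using assms(2) by (simp add: idx_eq_self)
  ultimately show ?thesis
    unfolding psum_mod_5[OF assms(1)] psum_Suc by simp
qed

definition odd_vertex_map :: "Z mat \<Rightarrow> (nat \<Rightarrow> Z) \<Rightarrow> (nat \<Rightarrow> Z) \<Rightarrow> nat \<Rightarrow> Z mat" where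
  "odd_vertex_map H b c k = mat2 1 (psum c k) 0 1 * H * mat2 1 (- psum b k) 0 1"

definition vertex_map :: "Z mat \<Rightarrow> (nat \<Rightarrow> Z) \<Rightarrow> (nat \<Rightarrow> Z) \<Rightarrow> nat \<Rightarrow> Z mat" where
  "vertex_map H b c i =
     (if odd i then odd_vertex_map H b c (i div 2)
      else transfer_odd (b (i + 1)) (c (i + 1)) (odd_vertex_map H b c (i div 2)))"

lemma odd_vertex_map_mat2:
  "odd_vertex_map (mat2 e f g h) b c k =
     mat2 (e + psum c k * g) (f + psum c k * h - psum b k * (e + psum c k * g)) g (h - psum b k * g)"
  by (simp add: odd_vertex_map_def algebra_simps)

lemma odd_vertex_map_entries:
  assumes "odd_vertex_map (mat2 e f g h) b c k = mat2 p q r s"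
  shows "p = e + psum c k * g" and "q = f + psum c k * h - psum b k * p"
    and "r = g" and "s = h - psum b k * g"
  using assms[symmetric] by (simp_all add: odd_vertex_map_mat2)

lemma odd_vertex_map_Suc_mod:
  assumes "(\<Sum>i=1..10. b i) = 0" and "(\<Sum>i=1..10. c i) = 0" and "m < 5"
  shows "odd_vertex_map (mat2 e f g h) b c (Suc m mod 5) =
    mat2 1 (c (2*m + 2) + c (2*(Suc m mod 5) + 1)) 0 1 * odd_vertex_map (mat2 e f g h) b c m
    * mat2 1 (- (b (2*m + 2) + b (2*(Suc m mod 5) + 1))) 0 1"
  unfolding odd_vertex_map_mat2 psum_Suc_mod[OF assms(1,3)] psum_Suc_mod[OF assms(2,3)]
  by (simp add: algebra_simps)

lemma vertex_map_carrier: "vertex_map (mat2 e f g h) b c i \<in> carrier_mat 2 2"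
  by (simp add: vertex_map_def odd_vertex_map_mat2)

lemma odd_vertex_map_defect:
  fixes h11 h12 h21 h22 :: complex
  defines "H \<equiv> mat2 (fps_const h11) (fps_const h12) (fps_const h21) (fps_const h22)"
  assumes "odd_vertex_map H b c k = mat2 p q r s" and "k < 5"
  shows "fps_nth (b (2*k + 1) * p + q - c (2*k + 1) * (r * b (2*k + 1) + s)) 0
           = h11 * point b k + h12 - point c k * (h21 * point b k + h22)"
proof -
  have b_c_odd: "b (2*k + 1) = point_fps b k + psum b k" "c (2*k + 1) = point_fps c k + psum c k"
    using psum_less_5[OF assms(3)] by (simp_all add: algebra_simps)
  have "b (2*k + 1) * p + q - c (2*k + 1) * (r * b (2*k + 1) + s) =
      fps_const h11 * point_fps b k + fps_const h12
      - point_fps c k * (fps_const h21 * point_fps b k + fps_const h22)"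
    unfolding b_c_odd odd_vertex_map_entries[OF assms(2)[unfolded H_def]] by (simp add: algebra_simps)
  then show ?thesis by (simp add: point_def)
qed

lemma vertex_map_odd_arrow:
  fixes h11 h12 h21 h22 :: complex
  defines "H \<equiv> mat2 (fps_const h11) (fps_const h12) (fps_const h21) (fps_const h22)"
  assumes "k < 5" and "h11 * point b k + h12 = point c k * (h21 * point b k + h22)"
  shows "vertex_map H b c (2*k + 1) * xmat b (2*k + 1) = xmat c (2*k + 1) * vertex_map H b c (2*k)"
    and "vertex_map H b c (2*k) * ymat b (2*k + 1) = ymat c (2*k + 1) * vertex_map H b c (2*k + 1)"
proof -
  obtain p q r s where M: "odd_vertex_map H b c k = mat2 p q r s"
    unfolding H_def odd_vertex_map_mat2 by blast
  have defect: "fps_nth (b (2*k + 1) * p + q - c (2*k + 1) * (r * b (2*k + 1) + s)) 0 = 0"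
    using odd_vertex_map_defect[OF M[unfolded H_def] assms(2)] assms(3) by simp
  have "vertex_map H b c (2*k + 1) = mat2 p q r s"
    "vertex_map H b c (2*k) = transfer_odd (b (2*k + 1)) (c (2*k + 1)) (mat2 p q r s)"
    using M by (simp_all add: vertex_map_def)
  note V = this
  have "odd (2*k + 1)" by simp
  note arrows = xmat_odd[OF this] ymat_odd[OF this]
  show "vertex_map H b c (2*k + 1) * xmat b (2*k + 1) = xmat c (2*k + 1) * vertex_map H b c (2*k)"
    and "vertex_map H b c (2*k) * ymat b (2*k + 1) = ymat c (2*k + 1) * vertex_map H b c (2*k + 1)"
    unfolding V arrows
    by (fact transfer_odd_intertwines_odd_arrows[OF defect])+
qed

lemma vertex_map_even_arrow:
  fixes h11 h12 h21 h22 :: complex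
  defines "H \<equiv> mat2 (fps_const h11) (fps_const h12) (fps_const h21) (fps_const h22)"
  assumes "(\<Sum>i=1..10. b i) = 0" and "(\<Sum>i=1..10. c i) = 0" and "m < 5"
    and "h11 * point b (Suc m mod 5) + h12 = point c (Suc m mod 5) * (h21 * point b (Suc m mod 5) + h22)"
  shows "vertex_map H b c ((2*m + 2) mod 10) * xmat b (2*m + 2) =
           xmat c (2*m + 2) * vertex_map H b c (2*m + 1)"
    and "vertex_map H b c (2*m + 1) * ymat b (2*m + 2) =
           ymat c (2*m + 2) * vertex_map H b c ((2*m + 2) mod 10)"
proof -
  define k where "k = Suc m mod 5"
  have k: "k < 5" "(2*m + 2) mod 10 = 2*k"
    unfolding k_def using mod_mult_mult1[of 2 "Suc m" 5] by simp_all
  obtain p q r s where M: "odd_vertex_map H b c k = mat2 p q r s"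
    unfolding H_def odd_vertex_map_mat2 by blast
  obtain p' q' r' s' where M': "odd_vertex_map H b c m = mat2 p' q' r' s'"
    unfolding H_def odd_vertex_map_mat2 by blast
  have defect: "fps_nth (b (2*k + 1) * p + q - c (2*k + 1) * (r * b (2*k + 1) + s)) 0 = 0"
    using odd_vertex_map_defect[OF M[unfolded H_def] k(1)] assms(5) by (simp add: k_def)
  have conj: "mat2 p q r s = mat2 1 (c (2*m + 2) + c (2*k + 1)) 0 1 * mat2 p' q' r' s'
      * mat2 1 (- (b (2*m + 2) + b (2*k + 1))) 0 1"
    using odd_vertex_map_Suc_mod[OF assms(2-4), where e = "fps_const h11" and f = "fps_const h12"
        and g = "fps_const h21" and h = "fps_const h22"]
    unfolding H_def[symmetric] k_def[symmetric] M M' .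
  have "vertex_map H b c ((2*m + 2) mod 10) = transfer_odd (b (2*k + 1)) (c (2*k + 1)) (mat2 p q r s)"
    "vertex_map H b c (2*m + 1) = mat2 p' q' r' s'"
    using M M' k(2) by (simp_all add: vertex_map_def)
  note V = this
  have "even (2*m + 2)" by simp
  note arrows = xmat_even[OF this] ymat_even[OF this]
  show "vertex_map H b c ((2*m + 2) mod 10) * xmat b (2*m + 2) =
          xmat c (2*m + 2) * vertex_map H b c (2*m + 1)"
    and "vertex_map H b c (2*m + 1) * ymat b (2*m + 2) =
          ymat c (2*m + 2) * vertex_map H b c ((2*m + 2) mod 10)"
    unfolding V arrows by (fact transfer_odd_intertwines_even_arrows[OF defect conj])+
qed

lemma vertex_map_invertible:
  fixes h11 h12 h21 h22 :: complex
  defines "H \<equiv> mat2 (fps_const h11) (fps_const h12) (fps_const h21) (fps_const h22)"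
  assumes "h11 * h22 - h12 * h21 \<noteq> 0" and "i < 10"
    and "h11 * point b (i div 2) + h12 = point c (i div 2) * (h21 * point b (i div 2) + h22)"
  shows "invertible_mat (vertex_map H b c i)"
proof -
  define k where "k = i div 2"
  obtain p q r s where M: "odd_vertex_map H b c k = mat2 p q r s"
    unfolding H_def odd_vertex_map_mat2 by blast
  have "p*s - q*r = fps_const h11 * fps_const h22 - fps_const h12 * fps_const h21"
    unfolding odd_vertex_map_entries[OF M[unfolded H_def]] by (simp add: algebra_simps del: fps_const_mult)
  with assms(2) have unit: "(p*s - q*r) * fps_const (1 / (h11 * h22 - h12 * h21)) = 1"
    by simp
  show ?thesis
  proof (cases "odd i")
    case True
    then show ?thesis using M invertible_mat2[OF unit] by (simp add: vertex_map_def k_def)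
  next
    case False
    then have i: "i = 2*k" by (simp add: k_def)
    have "fps_nth (b (2*k + 1) * p + q - c (2*k + 1) * (r * b (2*k + 1) + s)) 0 = 0"
      using odd_vertex_map_defect[OF M[unfolded H_def]] assms(3,4) by (simp add: k_def)
    then show ?thesis using M invertible_transfer_odd[OF _ unit] False
      by (simp add: vertex_map_def i)
  qed
qed

lemma M_iso_if_mobius:
  fixes b c :: "nat \<Rightarrow> Z" and h11 h12 h21 h22 :: complex
  assumes sum_b: "(\<Sum>i=1..10. b i) = 0" and sum_c: "(\<Sum>i=1..10. c i) = 0"
    and det: "h11 * h22 - h12 * h21 \<noteq> 0"
    and mobius: "\<forall>k<5. h11 * point b k + h12 = point c k * (h21 * point b k + h22)"
  shows "M_iso b c"
proof -
  define H where "H = mat2 (fps_const h11) (fps_const h12) (fps_const h21) (fps_const h22)"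
  let ?\<phi> = "vertex_map H b c"
  have "?\<phi> i \<in> carrier_mat 2 2 \<and> invertible_mat (?\<phi> i)" if "i < 10" for i
    using vertex_map_invertible[OF det that] mobius that by (simp add: H_def vertex_map_carrier)
  moreover have "?\<phi> (j mod 10) * xmat b j = xmat c j * ?\<phi> (j - 1) \<and>
      ?\<phi> (j - 1) * ymat b j = ymat c j * ?\<phi> (j mod 10)" if "j \<in> {1..10}" for j
  proof (cases "odd j")
    case True
    then obtain k where j: "j = 2*k + 1" using oddE by blast
    with that have "k < 5" by simp
    then show ?thesis
      using vertex_map_odd_arrow[of k h11 b h12 c h21 h22] mobius by (simp add: H_def j)
  next
    case False
    then obtain x where "j = 2*x" by (auto elim: evenE)
    define m where "m = x - 1"
    with that \<open>j = 2*x\<close> have j: "j = 2*m + 2" and "m < 5" by auto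
    then show ?thesis
      using vertex_map_even_arrow[OF sum_b sum_c, of m h11 h12 h21 h22] mobius by (simp add: H_def j)
  qed
  ultimately show ?thesis
    unfolding M_iso_def by blast
qed

lemma point_pattern:
  assumes "(\<Sum>i=1..10. b i) = 0" and "\<forall>i. odd i \<longrightarrow> \<not> fps_X dvd Bsum b i" and "l = 2*k + 1"
    and "fps_X dvd Bsum b l + Bsum b (l + 2)" and "fps_X dvd Bsum b (l + 2) + Bsum b (l + 4)"
  shows "point b (k + 2) = point b k" and "point b (k + 3) = point b (k + 1)"
    and "point b k \<noteq> point b (k + 1)" and "point b (k + 1) \<noteq> point b (k + 4)"
    and "point b k \<noteq> point b (k + 4)"
proof -
  define D where "D j = fps_nth (Bsum b (l + 2*j)) 0" for j
  have step: "point b (k + j) - point b (k + Suc j) = D j" for j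
    using point_diff_Suc[of b "k + j"] assms(3) by (simp add: D_def algebra_simps)
  have nonzero: "D j \<noteq> 0" for j
    using assms(2,3) by (simp add: D_def fps_X_dvd_iff_nth_0)
  have chain: "x - z = d + d'" if "x - y = d" and "y - z = d'" for x y z d d' :: complex
  proof -
    have "x - z = (x - y) + (y - z)" by simp
    then show ?thesis unfolding that .
  qed
  have e: "point b k - point b (k + 1) = D 0" "point b (k + 1) - point b (k + 2) = D 1"
    "point b (k + 2) - point b (k + 3) = D 2" "point b (k + 3) - point b (k + 4) = D 3"
    "point b (k + 4) - point b k = D 4"
    using step[of 0] step[of 1] step[of 2] step[of 3] step[of 4]
      point_mod_5[OF assms(1), of "k + 5"] point_mod_5[OF assms(1), of k] by simp_all
  have "D 0 + D 1 = 0" and "D 1 + D 2 = 0"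
    using assms(4,5) by (simp_all add: D_def fps_X_dvd_iff_nth_0)
  with chain[OF e(1,2)] chain[OF e(2,3)] chain[OF chain[OF e(2,3)] e(4)]
  have "point b k - point b (k + 2) = 0" "point b (k + 1) - point b (k + 3) = 0"
    "point b (k + 1) - point b (k + 4) = D 3"
    by simp_all
  then show "point b (k + 2) = point b k" and "point b (k + 3) = point b (k + 1)"
    and "point b k \<noteq> point b (k + 1)" and "point b (k + 1) \<noteq> point b (k + 4)"
    and "point b k \<noteq> point b (k + 4)"
    using e(1,5) nonzero[of 0] nonzero[of 3] nonzero[of 4] by auto
qed

lemma mobius_three_points:
  fixes z1 z2 z3 w1 w2 w3 :: "'a::field"
  assumes "z1 \<noteq> z2" "z2 \<noteq> z3" "z1 \<noteq> z3" "w1 \<noteq> w2" "w2 \<noteq> w3" "w1 \<noteq> w3"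
  obtains h11 h12 h21 h22 where "h11 * h22 - h12 * h21 \<noteq> 0"
    and "h11 * z1 + h12 = w1 * (h21 * z1 + h22)" and "h11 * z2 + h12 = w2 * (h21 * z2 + h22)"
    and "h11 * z3 + h12 = w3 * (h21 * z3 + h22)"
proof -
  define h11 where "h11 = (z2 - z1) * w1 * (w2 - w3) - (z2 - z3) * w3 * (w2 - w1)"
  define h12 where "h12 = z1 * (z2 - z3) * w3 * (w2 - w1) - z3 * (z2 - z1) * w1 * (w2 - w3)"
  define h21 where "h21 = (z2 - z1) * (w2 - w3) - (z2 - z3) * (w2 - w1)"
  define h22 where "h22 = z1 * (z2 - z3) * (w2 - w1) - z3 * (z2 - z1) * (w2 - w3)"
  have cross_ratio: "h11 * z + h12 - w * (h21 * z + h22) =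
      (z - z1) * (z2 - z3) * (w - w3) * (w2 - w1) - (z - z3) * (z2 - z1) * (w - w1) * (w2 - w3)" for z w
    unfolding h11_def h12_def h21_def h22_def by (simp add: algebra_simps)
  have "h11 * h22 - h12 * h21 = (z1 - z2) * (z2 - z3) * (z1 - z3) * ((w1 - w2) * (w2 - w3) * (w1 - w3))"
    unfolding h11_def h12_def h21_def h22_def by (simp add: algebra_simps)
  with assms have "h11 * h22 - h12 * h21 \<noteq> 0" by simp
  moreover have "h11 * z1 + h12 = w1 * (h21 * z1 + h22)"
    using cross_ratio[of z1 w1] by simp
  moreover have "h11 * z2 + h12 = w2 * (h21 * z2 + h22)"
    using cross_ratio[of z2 w2] by (simp add: algebra_simps)
  moreover have "h11 * z3 + h12 = w3 * (h21 * z3 + h22)"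
    using cross_ratio[of z3 w3] by simp
  ultimately show ?thesis by (rule that)
qed

lemma mobius_condition_all:
  fixes b c :: "nat \<Rightarrow> Z"
  assumes "(\<Sum>i=1..10. b i) = 0" and "(\<Sum>i=1..10. c i) = 0"
    and "point b (k + 2) = point b k" and "point b (k + 3) = point b (k + 1)"
    and "point c (k + 2) = point c k" and "point c (k + 3) = point c (k + 1)"
    and "h11 * point b k + h12 = point c k * (h21 * point b k + h22)"
    and "h11 * point b (k + 1) + h12 = point c (k + 1) * (h21 * point b (k + 1) + h22)"
    and "h11 * point b (k + 4) + h12 = point c (k + 4) * (h21 * point b (k + 4) + h22)"
  shows "h11 * point b m + h12 = point c m * (h21 * point b m + h22)"
proof -
  define j where "j = (m + 4*k) mod 5"
  have "(k + j) mod 5 = m mod 5"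
    unfolding j_def by (simp add: mod_add_right_eq algebra_simps)
  then have pts: "point b m = point b (k + j)" "point c m = point c (k + j)"
    using point_mod_5[OF assms(1), of m] point_mod_5[OF assms(1), of "k + j"]
      point_mod_5[OF assms(2), of m] point_mod_5[OF assms(2), of "k + j"] by simp_all
  have "j < 5" by (simp add: j_def)
  then consider "j = 0" | "j = 1" | "j = 2" | "j = 3" | "j = 4" by linarith
  then show ?thesis
    using pts assms(3-9) by cases simp_all
qed

theorem theorem2p7:
  fixes b c :: "nat \<Rightarrow> complex fps" and l :: nat
  assumes "(\<Sum>i=1..10. b i) = 0" and "(\<Sum>i=1..10. c i) = 0"
    and "\<forall>i. odd i \<longrightarrow> \<not> fps_X dvd Bsum b i"
    and "\<forall>i. odd i \<longrightarrow> \<not> fps_X dvd Bsum c i"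
    and "odd l"
    and "fps_X dvd Bsum b l + Bsum b (l + 2)"
    and "fps_X dvd Bsum b (l + 2) + Bsum b (l + 4)"
    and "\<forall>i. odd i \<and> idx i \<noteq> idx l \<and> idx i \<noteq> idx (l + 2) \<longrightarrow>
           \<not> fps_X dvd Bsum b i + Bsum b (i + 2)"
    and "fps_X dvd Bsum c l + Bsum c (l + 2)"
    and "fps_X dvd Bsum c (l + 2) + Bsum c (l + 4)"
    and "\<forall>i. odd i \<and> idx i \<noteq> idx l \<and> idx i \<noteq> idx (l + 2) \<longrightarrow>
           \<not> fps_X dvd Bsum c i + Bsum c (i + 2)"
  shows "M_iso b c"
proof -
  from \<open>odd l\<close> obtain k where l: "l = 2*k + 1" by (rule oddE)
  note b_pattern = point_pattern[OF assms(1,3) l assms(6,7)]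
  note c_pattern = point_pattern[OF assms(2,4) l assms(9,10)]
  obtain h11 h12 h21 h22 :: complex where det: "h11 * h22 - h12 * h21 \<noteq> 0"
    and "h11 * point b k + h12 = point c k * (h21 * point b k + h22)"
    and "h11 * point b (k + 1) + h12 = point c (k + 1) * (h21 * point b (k + 1) + h22)"
    and "h11 * point b (k + 4) + h12 = point c (k + 4) * (h21 * point b (k + 4) + h22)"
    by (rule mobius_three_points[OF b_pattern(3-5) c_pattern(3-5)])
  then have "\<forall>m<5. h11 * point b m + h12 = point c m * (h21 * point b m + h22)"
    using mobius_condition_all[OF assms(1,2) b_pattern(1,2) c_pattern(1,2)] by blast
  then show ?thesis
    by (rule M_iso_if_mobius[OF assms(1,2) det])
qed

end
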